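(* Let $F$ be a PB formula, $f\equiv0$, and let $(\mathcal C,\mathcal D,O_{\mathrm{lex}},\vec x,v)$ be a configuration where $\vec x=(x_1,\dots,x_m)$ and $O_{\mathrm{lex}}(\vec u,\vec w)$ is the single constraint $\sum_{i=1}^m 2^{m-i}(w_i-u_i)\ge0$. Let $\sigma$ be a permutation of the set of literals with $\sigma(\bar\ell)=\overline{\sigma(\ell)}$ for all literals $\ell$, such that $\sigma(y)=y$ for every variable $y\notin\{x_1,\dots,x_m\}$ and $\mathcal C|_\sigma=\mathcal C$ (equality of sets of constraints). Let $$C_{LL}:\quad \sum_{i=1}^m 2^{m-i}\bigl(\sigma(x_i)-x_i\bigr)\ge0 .$$ Then, taking $\sigma$ (restricted to variables) as the witness substitution, $$\mathcal C\cup\mathcal D\cup\{f\le v-1\}\cup\{\neg C_{LL}\}\vdash \mathcal C|_\sigma\cup O_{\mathrm{lex}}(\vec x|_\sigma,\vec x)\cup\{f|_\sigma\le f\}$$ and $$\mathcal C\cup\mathcal D\cup\{f\le v-1\}\cup\{\neg C_{LL}\}\cup O_{\mathrm{lex}}(\vec x,\vec x|_\sigma)\vdash 0\ge1 .$$ Consequently, if $(\mathcal C,\mathcal D,O_{\mathrm{lex}},\vec x,v)$ is weakly valid (resp. valid), then so is $(\mathcal C,\mathcal D\cup\{C_{LL}\},O_{\mathrm{lex}},\vec x,v)$.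
   Context: A literal is a variable $x$ or $\bar x=1-x$. A PB constraint is $C:\ \sum_i a_i\ell_i\ge A$ (integers; terms may be collected and constants moved across), with negation $\neg C:\ \sum_i-a_i\ell_i\ge -A+1$. For a substitution $\omega$ (map from variables to literals, identity elsewhere, extended to literals by $\omega(\bar x)=\overline{\omega(x)}$), $C|_\omega$ replaces each literal by its image and $G|_\omega=\{D|_\omega:D\in G\}$; $f|_\omega$ likewise. $O(\vec x|_\alpha,\vec x|_\beta)$ is $O(\vec u,\vec w)$ with $u_i$ replaced by $\alpha(x_i)$ and $w_i$ by $\beta(x_i)$ (identity if no substitution). $G\vdash D$ is cutting planes derivability (axioms, literal axioms $\ell\ge0$, positive integer linear combinations, division with rounding up), extended so that $G\vdash D$ whenever $0\ge1$ is derivable from $G\cup\{\neg D\}$; it is sound. Constraints $f\le\infty-1$ are trivially true. For input $F$ and objective $f$, a configuration $(\mathcal C,\mathcal D,O,\vec z,v)$ ($v\in\mathbb Z\cup\{\infty\}$; $O$ encoding a preorder $\alpha\preceq\beta$ iff $O(\vec z|_\alpha,\vec z|_\beta)$ true; $\alpha\preceq_f\beta$ iff $\alpha\preceq\beta$ and $f(\alpha)\le f(\beta)$) is weakly valid if (1) for every integer $v'<v$, satisfiability of $F\cup\{f\le v'\}$ implies satisfiability of $\mathcal C\cup\{f\le v'\}$; (2) every total $\rho$ satisfying $\mathcal C\cup\{f\le v-1\}$ admits a total $\rho'\preceq_f\rho$ satisfying $\mathcal C\cup\mathcal D\cup\{f\le v-1\}$. It is valid if also (3) $v<\infty$ implies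 $F\cup\{f\le v\}$ satisfiable; (4) for every integer $v'<v$, satisfiability of $\mathcal C\cup\{f\le v'\}$ implies satisfiability of $F\cup\{f\le v'\}$. *)

theory Defs
  imports Main "HOL-Library.Poly_Mapping" "HOL-Library.Product_Plus"
begin

datatype 'v lit = Pos 'v | Neg 'v

fun lit_neg :: "'v lit \<Rightarrow> 'v lit" where
  "lit_neg (Pos x) = Neg x"
| "lit_neg (Neg x) = Pos x"

text \<open>A linear form  sum_x c_x x + k  over 0/1 variables: coefficient map with finite support and
  a constant.  A PB constraint is stored in collected
  form (c, A) meaning  sum_x c_x x >= A; this identifies constraints up to collecting terms and
  moving constants across, as in the paper.\<close>

type_synonym 'v lin = "('v \<Rightarrow>\<^sub>0 int) \<times> int"
type_synonym 'v pbc = "('v \<Rightarrow>\<^sub>0 int) \<times> int"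

definition lin_scale :: "int \<Rightarrow> 'v lin \<Rightarrow> 'v lin" where
  "lin_scale k e = (frag_cmul k (fst e), k * snd e)"

fun lin_of_lit :: "'v lit \<Rightarrow> 'v lin" where
  "lin_of_lit (Pos x) = (Poly_Mapping.single x 1, 0)"
| "lin_of_lit (Neg x) = (Poly_Mapping.single x (-1), 1)"

definition lin_const :: "bool \<Rightarrow> 'v lin" where
  "lin_const b = (0, if b then 1 else 0)"

definition eval_lin :: "('v \<Rightarrow> bool) \<Rightarrow> 'v lin \<Rightarrow> int" where
  "eval_lin \<rho> e = (\<Sum>x\<in>Poly_Mapping.keys (fst e). Poly_Mapping.lookup (fst e) x * (if \<rho> x then 1 else 0)) + snd e"

definition geq :: "'v lin \<Rightarrow> int \<Rightarrow> 'v pbc" where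
  "geq e A = (fst e, A - snd e)"

definition sat :: "('v \<Rightarrow> bool) \<Rightarrow> 'v pbc \<Rightarrow> bool" where
  "sat \<rho> C \<longleftrightarrow> eval_lin \<rho> (fst C, 0) \<ge> snd C"

definition sat_set :: "('v \<Rightarrow> bool) \<Rightarrow> 'v pbc set \<Rightarrow> bool" where
  "sat_set \<rho> G \<longleftrightarrow> (\<forall>C\<in>G. sat \<rho> C)"

definition satisfiable :: "'v pbc set \<Rightarrow> bool" where
  "satisfiable G \<longleftrightarrow> (\<exists>\<rho>. sat_set \<rho> G)"

definition pb_neg :: "'v pbc \<Rightarrow> 'v pbc" where
  "pb_neg C = (- fst C, - snd C + 1)"

definition falsum :: "'v pbc" where
  "falsum = (0, 1)"

fun subst_lit :: "('v \<Rightarrow> 'v lit) \<Rightarrow> 'v lit \<Rightarrow> 'v lit" where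
  "subst_lit \<omega> (Pos x) = \<omega> x"
| "subst_lit \<omega> (Neg x) = lit_neg (\<omega> x)"

definition subst_lin :: "('v \<Rightarrow> 'v lit) \<Rightarrow> 'v lin \<Rightarrow> 'v lin" where
  "subst_lin \<omega> e = (\<Sum>x\<in>Poly_Mapping.keys (fst e). lin_scale (Poly_Mapping.lookup (fst e) x) (lin_of_lit (\<omega> x))) + (0, snd e)"

definition subst_pbc :: "('v \<Rightarrow> 'v lit) \<Rightarrow> 'v pbc \<Rightarrow> 'v pbc" where
  "subst_pbc \<omega> C = geq (subst_lin \<omega> (fst C, 0)) (snd C)"

definition obj_le :: "'v lin \<Rightarrow> int \<Rightarrow> 'v pbc" where
  "obj_le f k = geq (lin_scale (-1) f) (-k)"

datatype extint = Fin int | Infty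

fun ext_less :: "int \<Rightarrow> extint \<Rightarrow> bool" where
  "ext_less a (Fin b) = (a < b)"
| "ext_less a Infty = True"

fun obj_below :: "'v lin \<Rightarrow> extint \<Rightarrow> 'v pbc" where
  "obj_below f (Fin k) = obj_le f (k - 1)"
| "obj_below f Infty = (0, 0)"

definition obj_subst_le :: "('v \<Rightarrow> 'v lit) \<Rightarrow> 'v lin \<Rightarrow> 'v pbc" where
  "obj_subst_le \<omega> f = geq (f - subst_lin \<omega> f) 0"

inductive cp :: "'v pbc set \<Rightarrow> 'v pbc \<Rightarrow> bool" for G where
  cp_ax: "C \<in> G \<Longrightarrow> cp G C"
| cp_lit: "cp G (geq (lin_of_lit l) 0)"
| cp_add: "cp G C \<Longrightarrow> cp G D \<Longrightarrow> cp G (fst C + fst D, snd C + snd D)"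
| cp_mult: "cp G C \<Longrightarrow> k > 0 \<Longrightarrow> cp G (frag_cmul k (fst C), k * snd C)"
| cp_div: "cp G C \<Longrightarrow> d > 0 \<Longrightarrow> (\<forall>x. d dvd Poly_Mapping.lookup (fst C) x) \<Longrightarrow>
           cp G (Poly_Mapping.map (\<lambda>a. a div d) (fst C), - ((- snd C) div d))"

definition derives :: "'v pbc set \<Rightarrow> 'v pbc \<Rightarrow> bool" where
  "derives G D \<longleftrightarrow> cp G D \<or> cp (insert (pb_neg D) G) falsum"

definition derives_set :: "'v pbc set \<Rightarrow> 'v pbc set \<Rightarrow> bool" where
  "derives_set G H \<longleftrightarrow> (\<forall>D\<in>H. derives G D)"

text \<open>An order O is a template: given two vectors of linear forms (literals or constants) it yields
  a set of constraints.  z|alpha for a total assignment alpha is the vector of constants.\<close>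
type_synonym 'v order = "'v lin list \<Rightarrow> 'v lin list \<Rightarrow> 'v pbc set"

definition vec_asg :: "'v list \<Rightarrow> ('v \<Rightarrow> bool) \<Rightarrow> 'v lin list" where
  "vec_asg z \<alpha> = map (\<lambda>x. lin_const (\<alpha> x)) z"

definition vec_subst :: "'v list \<Rightarrow> ('v \<Rightarrow> 'v lit) \<Rightarrow> 'v lin list" where
  "vec_subst z \<omega> = map (\<lambda>x. lin_of_lit (\<omega> x)) z"

definition vec_id :: "'v list \<Rightarrow> 'v lin list" where
  "vec_id z = map (\<lambda>x. lin_of_lit (Pos x)) z"

definition ord_le :: "'v order \<Rightarrow> 'v list \<Rightarrow> ('v \<Rightarrow> bool) \<Rightarrow> ('v \<Rightarrow> bool) \<Rightarrow> bool" where
  "ord_le Ord z \<alpha> \<beta> \<longleftrightarrow> (\<forall>\<rho>. sat_set \<rho> (Ord (vec_asg z \<alpha>) (vec_asg z \<beta>)))"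

definition ord_le_f :: "'v order \<Rightarrow> 'v list \<Rightarrow> 'v lin \<Rightarrow> ('v \<Rightarrow> bool) \<Rightarrow> ('v \<Rightarrow> bool) \<Rightarrow> bool" where
  "ord_le_f Ord z f \<alpha> \<beta> \<longleftrightarrow> ord_le Ord z \<alpha> \<beta> \<and> eval_lin \<alpha> f \<le> eval_lin \<beta> f"

definition weakly_valid ::
  "'v pbc set \<Rightarrow> 'v lin \<Rightarrow> 'v pbc set \<Rightarrow> 'v pbc set \<Rightarrow> 'v order \<Rightarrow> 'v list \<Rightarrow> extint \<Rightarrow> bool" where
  "weakly_valid F f C D Ord z v \<longleftrightarrow>
     (\<forall>v'. ext_less v' v \<longrightarrow> satisfiable (F \<union> {obj_le f v'}) \<longrightarrow> satisfiable (C \<union> {obj_le f v'})) \<and>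
     (\<forall>\<rho>. sat_set \<rho> (C \<union> {obj_below f v}) \<longrightarrow>
        (\<exists>\<rho>'. ord_le_f Ord z f \<rho>' \<rho> \<and> sat_set \<rho>' (C \<union> D \<union> {obj_below f v})))"

definition valid ::
  "'v pbc set \<Rightarrow> 'v lin \<Rightarrow> 'v pbc set \<Rightarrow> 'v pbc set \<Rightarrow> 'v order \<Rightarrow> 'v list \<Rightarrow> extint \<Rightarrow> bool" where
  "valid F f C D Ord z v \<longleftrightarrow> weakly_valid F f C D Ord z v \<and>
     (\<forall>k. v = Fin k \<longrightarrow> satisfiable (F \<union> {obj_le f k})) \<and>
     (\<forall>v'. ext_less v' v \<longrightarrow> satisfiable (C \<union> {obj_le f v'}) \<longrightarrow> satisfiable (F \<union> {obj_le f v'}))"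

text \<open>O_lex(u, w):  sum_{i=1}^m 2^(m-i) (w_i - u_i) >= 0  (0-based index i here, weight 2^(m-1-i)).\<close>
definition O_lex :: "'v order" where
  "O_lex u w = {geq (\<Sum>i<length u. lin_scale (2 ^ (length u - 1 - i)) (w ! i - u ! i)) 0}"

definition C_LL :: "('v lit \<Rightarrow> 'v lit) \<Rightarrow> 'v list \<Rightarrow> 'v pbc" where
  "C_LL \<sigma> xs = geq (\<Sum>i<length xs. lin_scale (2 ^ (length xs - 1 - i))
                     (lin_of_lit (\<sigma> (Pos (xs ! i))) - lin_of_lit (Pos (xs ! i)))) 0"

end

theory Submission
  imports Defs
begin

text \<open>The derivations are immediate: O_lex(x|sigma, x) is a weakening of the premise not C_LL,
  and O_lex(x, x|sigma) is C_LL itself, which contradicts that premise. For the preservation of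
  (weak) validity one argues by induction on the lexicographic value of an assignment: take a
  witness of condition (2); if it violates C_LL, composing it with sigma yields an assignment of
  strictly smaller value that still satisfies C (by symmetry) and the trivial objective bound
  (as f = 0), and condition (2) applied to it gives a witness below.\<close>

lemma eval_lin_superset:
  assumes "finite S" "Poly_Mapping.keys (fst e) \<subseteq> S"
  shows "eval_lin \<rho> e = (\<Sum>x\<in>S. Poly_Mapping.lookup (fst e) x * (if \<rho> x then 1 else 0)) + snd e"
  unfolding eval_lin_def
  by (subst sum.mono_neutral_left[OF assms]) (auto simp: not_in_keys_iff_lookup_eq_zero)

lemma eval_lin_add: "eval_lin \<rho> (a + b) = eval_lin \<rho> a + eval_lin \<rho> b"
proof -
  let ?S = "Poly_Mapping.keys (fst a) \<union> Poly_Mapping.keys (fst b)"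
  have "finite ?S" by simp
  moreover have "Poly_Mapping.keys (fst (a + b)) \<subseteq> ?S"
    using keys_add[of "fst a" "fst b"] by simp
  ultimately show ?thesis
    by (simp add: eval_lin_superset[of ?S] lookup_add distrib_right sum.distrib)
qed

lemma eval_lin_zero: "eval_lin \<rho> 0 = 0"
  by (simp add: eval_lin_def)

lemma eval_lin_uminus: "eval_lin \<rho> (- a) = - eval_lin \<rho> a"
  by (simp add: eval_lin_def sum_negf)

lemma eval_lin_diff: "eval_lin \<rho> (a - b) = eval_lin \<rho> a - eval_lin \<rho> b"
  using eval_lin_add[of \<rho> a "- b"] by (simp add: eval_lin_uminus)

lemma eval_lin_scale: "eval_lin \<rho> (lin_scale k a) = k * eval_lin \<rho> a"
proof -
  have "eval_lin \<rho> (lin_scale k a) = (\<Sum>x\<in>Poly_Mapping.keys (fst a).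
          Poly_Mapping.lookup (fst (lin_scale k a)) x * (if \<rho> x then 1 else 0)) + snd (lin_scale k a)"
    by (rule eval_lin_superset) (simp_all add: lin_scale_def keys_cmul)
  then show ?thesis
    by (simp add: lin_scale_def eval_lin_def sum_distrib_left distrib_left mult.assoc)
qed

lemma eval_lin_sum: "eval_lin \<rho> (sum g A) = (\<Sum>i\<in>A. eval_lin \<rho> (g i))"
  using sum_comp_morphism[of "eval_lin \<rho>" g A] by (simp add: eval_lin_zero eval_lin_add o_def)

fun lit_sat :: "('v \<Rightarrow> bool) \<Rightarrow> 'v lit \<Rightarrow> bool" where
  "lit_sat \<rho> (Pos x) = \<rho> x"
| "lit_sat \<rho> (Neg x) = (\<not> \<rho> x)"

lemma eval_lin_of_lit: "eval_lin \<rho> (lin_of_lit l) = (if lit_sat \<rho> l then 1 else 0)"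
  by (cases l) (auto simp: eval_lin_def)

lemma eval_lin_const: "eval_lin \<rho> (lin_const b) = (if b then 1 else 0)"
  by (simp add: eval_lin_def lin_const_def)

lemma sat_geq: "sat \<rho> (geq e A) \<longleftrightarrow> A \<le> eval_lin \<rho> e"
proof -
  have "eval_lin \<rho> e = eval_lin \<rho> (fst e, 0) + snd e"
    by (simp add: eval_lin_def)
  then show ?thesis by (auto simp: sat_def geq_def)
qed

lemma eval_subst_lin: "eval_lin \<rho> (subst_lin \<omega> e) = eval_lin (\<lambda>y. lit_sat \<rho> (\<omega> y)) e"
  by (simp add: subst_lin_def eval_lin_add eval_lin_sum eval_lin_scale eval_lin_of_lit)
     (simp add: eval_lin_def)

lemma sat_subst_pbc: "sat \<rho> (subst_pbc \<omega> c) \<longleftrightarrow> sat (\<lambda>y. lit_sat \<rho> (\<omega> y)) c"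
  by (simp add: subst_pbc_def sat_geq eval_subst_lin) (simp add: sat_def)

lemma sat_obj_below_zero_indep: "sat \<rho> (obj_below 0 v) \<longleftrightarrow> sat \<rho>' (obj_below 0 v)"
  by (cases v) (simp_all add: obj_le_def sat_def eval_lin_def lin_scale_def geq_def)

definition lex_value :: "'v list \<Rightarrow> ('v \<Rightarrow> bool) \<Rightarrow> int" where
  "lex_value xs \<alpha> = (\<Sum>i<length xs. 2 ^ (length xs - 1 - i) * (if \<alpha> (xs ! i) then 1 else 0))"

lemma lex_value_nonneg: "0 \<le> lex_value xs \<alpha>"
  unfolding lex_value_def by (intro sum_nonneg) auto

lemma ord_le_f_O_lex_iff: "ord_le_f O_lex xs 0 \<alpha> \<beta> \<longleftrightarrow> lex_value xs \<alpha> \<le> lex_value xs \<beta>"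
proof -
  have "eval_lin \<rho> (\<Sum>i<length (vec_asg xs \<alpha>). lin_scale (2 ^ (length (vec_asg xs \<alpha>) - 1 - i))
          (vec_asg xs \<beta> ! i - vec_asg xs \<alpha> ! i)) = lex_value xs \<beta> - lex_value xs \<alpha>" for \<rho>
    by (simp add: eval_lin_sum eval_lin_scale eval_lin_diff vec_asg_def eval_lin_const
        lex_value_def sum_subtractf[symmetric] right_diff_distrib)
  then show ?thesis
    by (simp add: ord_le_f_def ord_le_def O_lex_def sat_set_def sat_geq eval_lin_zero)
qed

definition lex_diff :: "('v lit \<Rightarrow> 'v lit) \<Rightarrow> 'v list \<Rightarrow> 'v lin" where
  "lex_diff \<sigma> xs = (\<Sum>i<length xs. lin_scale (2 ^ (length xs - 1 - i))
                     (lin_of_lit (\<sigma> (Pos (xs ! i))) - lin_of_lit (Pos (xs ! i))))"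

lemma C_LL_eq_geq_lex_diff: "C_LL \<sigma> xs = geq (lex_diff \<sigma> xs) 0"
  by (simp add: C_LL_def lex_diff_def)

lemma sat_C_LL_iff:
  "sat \<rho> (C_LL \<sigma> xs) \<longleftrightarrow> lex_value xs \<rho> \<le> lex_value xs (\<lambda>y. lit_sat \<rho> (\<sigma> (Pos y)))"
proof -
  have "eval_lin \<rho> (lex_diff \<sigma> xs) = lex_value xs (\<lambda>y. lit_sat \<rho> (\<sigma> (Pos y))) - lex_value xs \<rho>"
    using eval_lin_of_lit[of \<rho> "Pos _"]
    by (simp add: lex_diff_def eval_lin_sum eval_lin_scale eval_lin_diff eval_lin_of_lit
        lex_value_def sum_subtractf[symmetric] right_diff_distrib)
  then show ?thesis by (simp add: C_LL_eq_geq_lex_diff sat_geq)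
qed

lemma O_lex_id_subst: "O_lex (vec_id xs) (vec_subst xs (\<lambda>x. \<sigma> (Pos x))) = {C_LL \<sigma> xs}"
  by (simp add: O_lex_def C_LL_def vec_id_def vec_subst_def)

lemma minus_lin_scale_diff: "- lin_scale k (b - a) = lin_scale k (a - b)"
  by (auto simp: lin_scale_def lookup_minus algebra_simps intro!: poly_mapping_eqI)

lemma O_lex_subst_id: "O_lex (vec_subst xs (\<lambda>x. \<sigma> (Pos x))) (vec_id xs) = {geq (- lex_diff \<sigma> xs) 0}"
proof -
  have "(\<Sum>i<length xs. lin_scale (2 ^ (length xs - 1 - i)) (vec_id xs ! i - vec_subst xs (\<lambda>x. \<sigma> (Pos x)) ! i))
      = - lex_diff \<sigma> xs"
    by (simp add: vec_id_def vec_subst_def lex_diff_def sum_negf[symmetric] minus_lin_scale_diff)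
  moreover have "length (vec_subst xs (\<lambda>x. \<sigma> (Pos x))) = length xs"
    by (simp add: vec_subst_def)
  ultimately show ?thesis
    unfolding O_lex_def by simp
qed

lemma cp_falsum_of_opposite:
  assumes "cp G (a, b)" "cp G (- a, b')" "1 \<le> b + b'"
  shows "cp G falsum"
proof -
  define s where "s = b + b'"
  have "1 \<le> s" using assms(3) by (simp add: s_def)
  have "cp G (0, s)"
    using cp_add[OF assms(1,2)] by (simp add: s_def)
  then have "cp G (Poly_Mapping.map (\<lambda>a. a div s) 0, - ((- s) div s))"
    using cp_div[of G "(0, s)" s] \<open>1 \<le> s\<close> by simp
  moreover have "Poly_Mapping.map (\<lambda>a. a div s) (0 :: 'a \<Rightarrow>\<^sub>0 int) = 0"
    by (simp add: map_eq_zero_iff)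
  moreover have "(- s) div s = - 1"
    using \<open>1 \<le> s\<close> by (simp add: zdiv_zminus1_eq_if)
  ultimately show ?thesis
    by (simp add: falsum_def)
qed

lemma cp_falsum_of_neg:
  assumes "c \<in> G" "pb_neg c \<in> G"
  shows "cp G falsum"
proof -
  have "cp G (fst c, snd c)" "cp G (- fst c, - snd c + 1)"
    using assms by (auto intro: cp_ax simp: pb_neg_def)
  then show ?thesis by (rule cp_falsum_of_opposite) simp
qed

text \<open>The negation of e \<ge> 0 is -e \<ge> 1, which is stronger than -e \<ge> 0.\<close>
lemma derives_geq_uminus_of_neg:
  assumes "pb_neg (geq e 0) \<in> G"
  shows "derives G (geq (- e) 0)"
proof -
  let ?H = "insert (pb_neg (geq (- e) 0)) G"
  have "cp ?H (fst e, - snd e + 1)"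
    by (rule cp_ax) (simp add: pb_neg_def geq_def)
  moreover have "cp ?H (- fst e, snd e + 1)"
    using assms by (intro cp_ax) (simp add: pb_neg_def geq_def)
  ultimately have "cp ?H falsum"
    by (rule cp_falsum_of_opposite) simp
  then show ?thesis by (simp add: derives_def)
qed

lemma derives_obj_subst_le_zero: "derives G (obj_subst_le \<omega> 0)"
proof -
  have "subst_lin \<omega> 0 = 0"
    by (simp add: subst_lin_def zero_prod_def)
  then have "pb_neg (obj_subst_le \<omega> 0) = falsum"
    by (simp add: obj_subst_le_def geq_def pb_neg_def falsum_def)
  then show ?thesis by (simp add: derives_def cp_ax)
qed

lemma weakly_valid_O_lex_insert_C_LL:
  assumes wv: "weakly_valid F 0 C D O_lex xs v"
    and sym: "subst_pbc (\<lambda>x. \<sigma> (Pos x)) ` C \<subseteq> C"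
  shows "weakly_valid F 0 C (D \<union> {C_LL \<sigma> xs}) O_lex xs v"
proof -
  let ?B = "obj_below 0 v"
  have witness: "\<exists>\<rho>'. lex_value xs \<rho>' \<le> lex_value xs \<rho> \<and> sat_set \<rho>' (C \<union> D \<union> {?B})"
    if "sat_set \<rho> (C \<union> {?B})" for \<rho>
    using wv that unfolding weakly_valid_def ord_le_f_O_lex_iff by blast
  have "\<exists>\<rho>'. lex_value xs \<rho>' \<le> lex_value xs \<rho> \<and> sat_set \<rho>' (C \<union> (D \<union> {C_LL \<sigma> xs}) \<union> {?B})"
    if "sat_set \<rho> (C \<union> {?B})" for \<rho>
    using that
  proof (induction "nat (lex_value xs \<rho>)" arbitrary: \<rho> rule: less_induct)
    case less
    obtain \<rho>1 where le1: "lex_value xs \<rho>1 \<le> lex_value xs \<rho>"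
      and sat1: "sat_set \<rho>1 (C \<union> D \<union> {?B})"
      using witness[OF less.prems] by blast
    show ?case
    proof (cases "sat \<rho>1 (C_LL \<sigma> xs)")
      case True
      then show ?thesis using le1 sat1 by (auto simp: sat_set_def)
    next
      case False
      let ?\<rho>\<sigma> = "\<lambda>y. lit_sat \<rho>1 (\<sigma> (Pos y))"
      have lt: "lex_value xs ?\<rho>\<sigma> < lex_value xs \<rho>1"
        using False by (simp add: sat_C_LL_iff)
      have "sat_set ?\<rho>\<sigma> (C \<union> {?B})"
        unfolding sat_set_def
      proof
        fix c assume "c \<in> C \<union> {?B}"
        then show "sat ?\<rho>\<sigma> c"
        proof
          assume "c \<in> C"
          with sym have "subst_pbc (\<lambda>x. \<sigma> (Pos x)) c \<in> C" by blast
          with sat1 have "sat \<rho>1 (subst_pbc (\<lambda>x. \<sigma> (Pos x)) c)" by (simp add: sat_set_def)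
          then show ?thesis by (simp add: sat_subst_pbc)
        next
          assume "c \<in> {?B}"
          with sat1 show ?thesis
            by (simp add: sat_set_def sat_obj_below_zero_indep[of ?\<rho>\<sigma> v \<rho>1])
        qed
      qed
      moreover have "nat (lex_value xs ?\<rho>\<sigma>) < nat (lex_value xs \<rho>)"
        using lt le1 lex_value_nonneg[of xs ?\<rho>\<sigma>] by simp
      ultimately obtain \<rho>' where "lex_value xs \<rho>' \<le> lex_value xs ?\<rho>\<sigma>"
        and "sat_set \<rho>' (C \<union> (D \<union> {C_LL \<sigma> xs}) \<union> {?B})"
        using less.hyps by blast
      then show ?thesis
        using lt le1 by (intro exI[of _ \<rho>']) simp
    qed
  qed
  then show ?thesis
    using wv unfolding weakly_valid_def ord_le_f_O_lex_iff by blast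
qed

theorem mainTheorem9:
  fixes F C D :: "'v pbc set" and xs :: "'v list" and \<sigma> :: "'v lit \<Rightarrow> 'v lit" and v :: extint
  assumes perm: "bij \<sigma>"
    and neg_compat: "\<forall>l. \<sigma> (lit_neg l) = lit_neg (\<sigma> l)"
    and fix_other: "\<forall>y. y \<notin> set xs \<longrightarrow> \<sigma> (Pos y) = Pos y"
    and sym: "subst_pbc (\<lambda>x. \<sigma> (Pos x)) ` C = C"
  shows "derives_set (C \<union> D \<union> {obj_below 0 v} \<union> {pb_neg (C_LL \<sigma> xs)})
           (subst_pbc (\<lambda>x. \<sigma> (Pos x)) ` C
            \<union> O_lex (vec_subst xs (\<lambda>x. \<sigma> (Pos x))) (vec_id xs)
            \<union> {obj_subst_le (\<lambda>x. \<sigma> (Pos x)) 0})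
    \<and> derives (C \<union> D \<union> {obj_below 0 v} \<union> {pb_neg (C_LL \<sigma> xs)}
                  \<union> O_lex (vec_id xs) (vec_subst xs (\<lambda>x. \<sigma> (Pos x)))) falsum
    \<and> (weakly_valid F 0 C D O_lex xs v \<longrightarrow> weakly_valid F 0 C (D \<union> {C_LL \<sigma> xs}) O_lex xs v)
    \<and> (valid F 0 C D O_lex xs v \<longrightarrow> valid F 0 C (D \<union> {C_LL \<sigma> xs}) O_lex xs v)"
proof -
  let ?G = "C \<union> D \<union> {obj_below 0 v} \<union> {pb_neg (C_LL \<sigma> xs)}"
  have neg_C_LL: "pb_neg (geq (lex_diff \<sigma> xs) 0) \<in> ?G"
    by (simp add: C_LL_eq_geq_lex_diff)
  have "derives_set ?G (subst_pbc (\<lambda>x. \<sigma> (Pos x)) ` C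
         \<union> O_lex (vec_subst xs (\<lambda>x. \<sigma> (Pos x))) (vec_id xs) \<union> {obj_subst_le (\<lambda>x. \<sigma> (Pos x)) 0})"
    unfolding derives_set_def sym O_lex_subst_id
    using derives_geq_uminus_of_neg[OF neg_C_LL] derives_obj_subst_le_zero
    by (auto simp: derives_def intro: cp_ax)
  moreover have "derives (?G \<union> O_lex (vec_id xs) (vec_subst xs (\<lambda>x. \<sigma> (Pos x)))) falsum"
    unfolding O_lex_id_subst derives_def
    by (rule disjI1, rule cp_falsum_of_neg[of "C_LL \<sigma> xs"]) auto
  moreover have "weakly_valid F 0 C D O_lex xs v \<Longrightarrow> weakly_valid F 0 C (D \<union> {C_LL \<sigma> xs}) O_lex xs v"
    using sym by (intro weakly_valid_O_lex_insert_C_LL) auto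
  ultimately show ?thesis
    unfolding valid_def by blast
qed

end
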